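(* Consider the Gaussian crossed effect model with $K=2$, $L=1$, $I_1=I_2=I$, and the circulant design $n^{(1,2)}_{ij}=1$ if the cyclic distance between $i$ and $j$ modulo $I$ is at most $d/2$ and $n^{(1,2)}_{ij}=0$ otherwise, where $d$ is a positive even integer with $d+1\le I$ (so levels are balanced with $\bar n=d+1$ and $N=I(d+1)$). Using the ordering $(a^{(1)}_1,\dots,a^{(1)}_I,a^{(2)}_1,\dots,a^{(2)}_I,a^{(0)})$, the ratio $n_{\boldsymbol{L}}/n_{\boldsymbol{Q}}$ is bounded by a constant (e.g. $3$) uniformly in $N$ and $d$, and $\mathrm{Cost(SLA)}=\Theta(N\bar n)$ with constants independent of $N$ and $d$.
   Context: Model: $y_j\sim\mathcal{N}(a^{(0)}+a^{(1)}_{i_1[j]}+a^{(2)}_{i_2[j]},\tau^{-1})$, priors $a^{(k)}_i\sim\mathcal{N}(0,\tau_k^{-1})$, $a^{(0)}\sim\mathcal{N}(\mu_{pr},T_{pr}^{-1})$; $n^{(1,2)}_{ij}$ is the number of observations with factor-1 level $i$ and factor-2 level $j$; $\bar n=KN/p$ with $p=I_1+I_2$. The posterior precision $\boldsymbol{Q}$ has entries $\boldsymbol{Q}[a^{(0)},a^{(0)}]=T_{pr}+N\tau$, $\boldsymbol{Q}[a^{(0)},a^{(k)}_i]=n^{(k)}_i\tau$, $\boldsymbol{Q}[a^{(k)}_i,a^{(k)}_i]=\tau_k+n^{(k)}_i\tau$, $\boldsymbol{Q}[a^{(1)}_i,a^{(2)}_j]=n^{(1,2)}_{ij}\tau$,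 zero otherwise. $G_{\boldsymbol{Q}}$: graph with edge iff off-diagonal entry nonzero. For the given ordering $\theta_1,\dots,\theta_M$, $n_{\boldsymbol{L},m}$ counts $j\ge m$ with $j=m$ or a path from $\theta_m$ to $\theta_j$ in $G_{\boldsymbol{Q}}$ with all intermediate vertices among $\theta_1,\dots,\theta_{m-1}$; $n_{\boldsymbol{L}}=\sum_m n_{\boldsymbol{L},m}$; $n_{\boldsymbol{Q}}$ is the number of nonzero entries in the lower-triangular part (including diagonal) of $\boldsymbol{Q}$. $\mathrm{Cost(SLA)}$ is the flop count of the column Cholesky recursion $L_{mm}^2=Q_{mm}-\sum_{\ell<m}L_{m\ell}^2$, $L_{jm}=(Q_{jm}-\sum_{\ell<m}L_{j\ell}L_{m\ell})/L_{mm}$, restricted to the potential nonzero pattern; it satisfies $\mathrm{Cost(SLA)}=\Theta(\sum_m n_{\boldsymbol{L},m}^2)$. $A=\Theta(B)$ means $c_1\le A/B\le c_2$ for constants $c_1,c_2>0$. *)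

theory Defs
  imports Complex_Main
begin

datatype param = A0 | A1 nat | A2 nat

definition cdist :: "nat \<Rightarrow> nat \<Rightarrow> nat \<Rightarrow> nat" where
  "cdist I i j = nat (min ((int i - int j) mod int I) ((int j - int i) mod int I))"

text \<open>Circulant design: levels are 1..I for both factors.\<close>
definition n12 :: "nat \<Rightarrow> nat \<Rightarrow> nat \<Rightarrow> nat \<Rightarrow> nat" where
  "n12 I d i j = (if cdist I i j \<le> d div 2 then 1 else 0)"

definition n1 :: "nat \<Rightarrow> nat \<Rightarrow> nat \<Rightarrow> nat" where
  "n1 I d i = (\<Sum>j\<in>{1..I}. n12 I d i j)"

definition n2 :: "nat \<Rightarrow> nat \<Rightarrow> nat \<Rightarrow> nat" where
  "n2 I d j = (\<Sum>i\<in>{1..I}. n12 I d i j)"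

definition Nobs :: "nat \<Rightarrow> nat \<Rightarrow> nat" where
  "Nobs I d = (\<Sum>i\<in>{1..I}. \<Sum>j\<in>{1..I}. n12 I d i j)"

text \<open>nbar = K N / p with K = 2 and p = I_1 + I_2 = 2 I.\<close>
definition nbar :: "nat \<Rightarrow> nat \<Rightarrow> real" where
  "nbar I d = real (2 * Nobs I d) / real (2 * I)"

text \<open>Posterior precision matrix Q (tau: noise precision, tau1 tau2: prior
  precisions of the two factors, Tpr: prior precision of the intercept).\<close>
fun Qm :: "real \<Rightarrow> real \<Rightarrow> real \<Rightarrow> real \<Rightarrow> nat \<Rightarrow> nat \<Rightarrow> param \<Rightarrow> param \<Rightarrow> real" where
  "Qm tau tau1 tau2 Tpr I d A0 A0 = Tpr + real (Nobs I d) * tau"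
| "Qm tau tau1 tau2 Tpr I d A0 (A1 i) = real (n1 I d i) * tau"
| "Qm tau tau1 tau2 Tpr I d (A1 i) A0 = real (n1 I d i) * tau"
| "Qm tau tau1 tau2 Tpr I d A0 (A2 j) = real (n2 I d j) * tau"
| "Qm tau tau1 tau2 Tpr I d (A2 j) A0 = real (n2 I d j) * tau"
| "Qm tau tau1 tau2 Tpr I d (A1 i) (A1 i') =
     (if i = i' then tau1 + real (n1 I d i) * tau else 0)"
| "Qm tau tau1 tau2 Tpr I d (A2 j) (A2 j') =
     (if j = j' then tau2 + real (n2 I d j) * tau else 0)"
| "Qm tau tau1 tau2 Tpr I d (A1 i) (A2 j) = real (n12 I d i j) * tau"
| "Qm tau tau1 tau2 Tpr I d (A2 j) (A1 i) = real (n12 I d i j) * tau"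

definition theta :: "nat \<Rightarrow> nat \<Rightarrow> param" where
  "theta I m = (if m \<le> I then A1 m else if m \<le> 2 * I then A2 (m - I) else A0)"

definition Msize :: "nat \<Rightarrow> nat" where
  "Msize I = 2 * I + 1"

definition Qord :: "real \<Rightarrow> real \<Rightarrow> real \<Rightarrow> real \<Rightarrow> nat \<Rightarrow> nat \<Rightarrow> nat \<Rightarrow> nat \<Rightarrow> real" where
  "Qord tau tau1 tau2 Tpr I d m j = Qm tau tau1 tau2 Tpr I d (theta I m) (theta I j)"

definition adjQ :: "real \<Rightarrow> real \<Rightarrow> real \<Rightarrow> real \<Rightarrow> nat \<Rightarrow> nat \<Rightarrow> nat \<Rightarrow> nat \<Rightarrow> bool" where
  "adjQ tau tau1 tau2 Tpr I d m j \<longleftrightarrow>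
     m \<in> {1..Msize I} \<and> j \<in> {1..Msize I} \<and> m \<noteq> j \<and> Qord tau tau1 tau2 Tpr I d m j \<noteq> 0"

definition path_via :: "(nat \<Rightarrow> nat \<Rightarrow> bool) \<Rightarrow> nat set \<Rightarrow> nat \<Rightarrow> nat \<Rightarrow> bool" where
  "path_via adj S x y \<longleftrightarrow>
     (\<exists>vs. length vs \<ge> 2 \<and> hd vs = x \<and> last vs = y \<and>
           (\<forall>i < length vs - 1. adj (vs ! i) (vs ! Suc i)) \<and>
           set (butlast (tl vs)) \<subseteq> S)"

text \<open>Potential nonzero pattern of L: entry (j, m) with j \<ge> m.\<close>
definition Lpat :: "real \<Rightarrow> real \<Rightarrow> real \<Rightarrow> real \<Rightarrow> nat \<Rightarrow> nat \<Rightarrow> nat \<Rightarrow> nat \<Rightarrow> bool" where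
  "Lpat tau tau1 tau2 Tpr I d j m \<longleftrightarrow>
     m \<in> {1..Msize I} \<and> j \<in> {m..Msize I} \<and>
     (j = m \<or> path_via (adjQ tau tau1 tau2 Tpr I d) {1..<m} m j)"

definition nLm :: "real \<Rightarrow> real \<Rightarrow> real \<Rightarrow> real \<Rightarrow> nat \<Rightarrow> nat \<Rightarrow> nat \<Rightarrow> nat" where
  "nLm tau tau1 tau2 Tpr I d m = card {j \<in> {m..Msize I}. Lpat tau tau1 tau2 Tpr I d j m}"

definition nL :: "real \<Rightarrow> real \<Rightarrow> real \<Rightarrow> real \<Rightarrow> nat \<Rightarrow> nat \<Rightarrow> nat" where
  "nL tau tau1 tau2 Tpr I d = (\<Sum>m\<in>{1..Msize I}. nLm tau tau1 tau2 Tpr I d m)"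

definition nQ :: "real \<Rightarrow> real \<Rightarrow> real \<Rightarrow> real \<Rightarrow> nat \<Rightarrow> nat \<Rightarrow> nat" where
  "nQ tau tau1 tau2 Tpr I d =
     card {(j, m). m \<in> {1..Msize I} \<and> j \<in> {m..Msize I} \<and> Qord tau tau1 tau2 Tpr I d j m \<noteq> 0}"

text \<open>Flop count of the column Cholesky recursion restricted to the potential
  nonzero pattern: computing L_jm (j \<ge> m, in the pattern) costs one
  multiplication and one subtraction for every l < m with L_jl and L_ml in the
  pattern, plus one final square root (j = m) or division (j > m).\<close>
definition CostSLA :: "real \<Rightarrow> real \<Rightarrow> real \<Rightarrow> real \<Rightarrow> nat \<Rightarrow> nat \<Rightarrow> nat" where
  "CostSLA tau tau1 tau2 Tpr I d =
     (\<Sum>m\<in>{1..Msize I}. \<Sum>j\<in>{j \<in> {m..Msize I}. Lpat tau tau1 tau2 Tpr I d j m}.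
        2 * card {l \<in> {1..<m}. Lpat tau tau1 tau2 Tpr I d j l \<and> Lpat tau tau1 tau2 Tpr I d m l} + 1)"

end

theory Submission
  imports Defs
begin

text \<open>
Factor-1 levels are pairwise
non-adjacent, so the Cholesky column of a factor-1 level consists of itself, its d + 1 factor-2
neighbours and the intercept. From the factor-2 level k, a path through eliminated vertices
alternates between factor-1 levels and earlier factor-2 levels, so it can only end at a factor-2
level sharing a factor-1 neighbour with a level at most k; by the band structure of the design
this leaves at most 2d + 2 entries. A factor-1 column of Q already has d + 2 entries and every
column has its diagonal, hence n_L is at most 3 n_Q.

Each column of L costs at most (2d + 3) (2 r + 1) flops, r the length of the corresponding row,
which sums to O(I d^2) = O(N nbar). Conversely, two factor-2 levels with a common factor-1
neighbour i are joined by fill-in through i, and i then contributes to their inner product;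
counting the pairs of the d + 1 neighbours of each i gives at least I d (d + 1) flops.
\<close>

lemma sum_eq_card_if_0_or_1:
  fixes f :: "'a \<Rightarrow> nat"
  assumes "finite A" and "\<And>x. x \<in> A \<Longrightarrow> f x = 0 \<or> f x = 1"
  shows "sum f A = card {x \<in> A. f x = 1}"
proof -
  have "sum f A = (\<Sum>x\<in>A. if f x = 1 then 1 else 0)"
    using assms(2) by (intro sum.cong) auto
  also have "\<dots> = card {x \<in> A. f x = 1}"
    using assms(1) by (simp add: sum.If_cases Int_def)
  finally show ?thesis .
qed

lemma card_pairs_eq_sum:
  assumes "finite A" and "\<And>m. m \<in> A \<Longrightarrow> finite (B m)"
  shows "card {(j, m). m \<in> A \<and> j \<in> B m \<and> P j m} = (\<Sum>m\<in>A. card {j \<in> B m. P j m})"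
proof -
  have "{(j, m). m \<in> A \<and> j \<in> B m \<and> P j m} = (\<lambda>(m, j). (j, m)) ` (SIGMA m:A. {j \<in> B m. P j m})"
    by auto
  moreover have "inj_on (\<lambda>(m, j). (j, m)) (SIGMA m:A. {j \<in> B m. P j m})"
    by (auto simp: inj_on_def)
  ultimately have "card {(j, m). m \<in> A \<and> j \<in> B m \<and> P j m} = card (SIGMA m:A. {j \<in> B m. P j m})"
    by (simp add: card_image)
  also have "\<dots> = (\<Sum>m\<in>A. card {j \<in> B m. P j m})" using assms by simp
  finally show ?thesis .
qed

lemma sum_card_below_le_sum_card_above:
  "(\<Sum>m\<in>{1..M::nat}. card {l \<in> {1..<m}. P m l}) \<le> (\<Sum>l\<in>{1..M}. card {m \<in> {l..M}. P m l})"
proof -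
  have "(\<Sum>m\<in>{1..M}. card {l \<in> {1..<m}. P m l}) = card {(l, m). m \<in> {1..M} \<and> l \<in> {1..<m} \<and> P m l}"
    by (rule card_pairs_eq_sum[symmetric]) auto
  also have "\<dots> = card ((\<lambda>(l, m). (m, l)) ` {(l, m). m \<in> {1..M} \<and> l \<in> {1..<m} \<and> P m l})"
    by (rule card_image[symmetric]) (auto simp: inj_on_def)
  also have "\<dots> \<le> card {(m, l). l \<in> {1..M} \<and> m \<in> {l..M} \<and> P m l}"
    by (rule card_mono) (auto intro: finite_subset[of _ "{1..M} \<times> {1..M}"])
  also have "\<dots> = (\<Sum>l\<in>{1..M}. card {m \<in> {l..M}. P m l})"
    by (rule card_pairs_eq_sum) auto
  finally show ?thesis .
qed

lemma sum_three_blocks: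
  fixes f :: "nat \<Rightarrow> 'a::comm_monoid_add"
  shows "sum f {1..2 * I + 1} = sum f {1..I} + (\<Sum>k\<in>{1..I}. f (I + k)) + f (2 * I + 1)"
proof -
  have "sum f {1..I + (I + 1)} = sum f {1..I} + sum f {I + 1..I + (I + 1)}"
    by (rule sum.ub_add_nat) simp
  moreover have "sum f {I + 1..I + (I + 1)} = sum f {I + 1..I + I} + f (2 * I + 1)"
    by (simp add: sum.cl_ivl_Suc mult_2)
  moreover have "sum f {I + 1..I + I} = (\<Sum>k\<in>{1..I}. f (I + k))"
    using sum.shift_bounds_cl_nat_ivl[of f 1 I I] by (simp add: add.commute)
  ultimately show ?thesis by (simp add: mult_2 add.assoc)
qed

lemma sum_square_symmetric:
  fixes F :: "nat \<Rightarrow> nat \<Rightarrow> nat"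
  assumes "\<And>a b. F a b = F b a"
  shows "(\<Sum>k\<in>{1..n}. \<Sum>k'\<in>{1..n}. F k k')
       = 2 * (\<Sum>k\<in>{1..n}. \<Sum>k'\<in>{k + 1..n}. F k k') + (\<Sum>k\<in>{1..n}. F k k)"
proof -
  let ?U = "\<lambda>k k'. if k < k' then F k k' else 0"
  let ?L = "\<lambda>k k'. if k' < k then F k k' else 0"
  let ?D = "\<lambda>k k'. if k' = k then F k k' else 0"
  have pw: "F k k' = ?U k k' + ?L k k' + ?D k k'" for k k' by auto
  have LU: "?L k k' = ?U k' k" for k k' using assms[of k k'] by simp
  have "(\<Sum>k\<in>{1..n}. \<Sum>k'\<in>{1..n}. F k k') =
     (\<Sum>k\<in>{1..n}. \<Sum>k'\<in>{1..n}. ?U k k') + (\<Sum>k\<in>{1..n}. \<Sum>k'\<in>{1..n}. ?L k k')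
     + (\<Sum>k\<in>{1..n}. \<Sum>k'\<in>{1..n}. ?D k k')"
    by (subst pw) (simp add: sum.distrib)
  moreover have "(\<Sum>k\<in>{1..n}. \<Sum>k'\<in>{1..n}. ?L k k') = (\<Sum>k\<in>{1..n}. \<Sum>k'\<in>{1..n}. ?U k k')"
  proof -
    have "(\<Sum>k\<in>{1..n}. \<Sum>k'\<in>{1..n}. ?L k k') = (\<Sum>k'\<in>{1..n}. \<Sum>k\<in>{1..n}. ?L k k')"
      by (rule sum.swap)
    also have "\<dots> = (\<Sum>k\<in>{1..n}. \<Sum>k'\<in>{1..n}. ?U k k')"
      by (simp only: LU)
    finally show ?thesis .
  qed
  moreover have "(\<Sum>k'\<in>{1..n}. ?U k k') = (\<Sum>k'\<in>{k + 1..n}. F k k')" for k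
  proof -
    have "(\<Sum>k'\<in>{1..n}. ?U k k') = sum (F k) {k' \<in> {1..n}. k < k'}"
      by (rule sum.inter_filter[symmetric]) simp
    also have "{k' \<in> {1..n}. k < k'} = {k + 1..n}" by auto
    finally show ?thesis .
  qed
  moreover have "(\<Sum>k'\<in>{1..n}. ?D k k') = (if k \<in> {1..n} then F k k else 0)" for k
    by (rule sum.delta) simp
  ultimately show ?thesis by simp
qed

section \<open>Paths through eliminated vertices\<close>

lemma path_via_invariant:
  assumes "path_via adj S x y" and "P x"
    and step: "\<And>u v. P u \<Longrightarrow> adj u v \<Longrightarrow> v \<in> S \<Longrightarrow> P v"
  shows "\<exists>u. P u \<and> adj u y"
proof -
  obtain vs where len: "length vs \<ge> 2" and hd: "hd vs = x" and last: "last vs = y"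
    and edges: "\<forall>i < length vs - 1. adj (vs ! i) (vs ! Suc i)"
    and inner: "set (butlast (tl vs)) \<subseteq> S"
    using assms(1) unfolding path_via_def by blast
  have ne: "vs \<noteq> []" using len by auto
  have inner_S: "vs ! i \<in> S" if "0 < i" "i < length vs - 1" for i
  proof -
    have "vs ! i = butlast (tl vs) ! (i - 1)"
      using that by (simp add: nth_butlast nth_tl)
    then show ?thesis using that inner nth_mem[of "i - 1" "butlast (tl vs)"] by auto
  qed
  have P_vs: "P (vs ! i)" if "i < length vs - 1" for i
    using that
  proof (induction i)
    case 0
    then show ?case using assms(2) hd ne by (simp add: hd_conv_nth)
  next
    case (Suc i)
    then show ?case using step edges inner_S by auto
  qed
  define i where "i = length vs - 2"
  have i: "i < length vs - 1" and Suc_i: "Suc i = length vs - 1" using len by (auto simp: i_def)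
  have "adj (vs ! i) (vs ! Suc i)" using edges i by blast
  also have "vs ! Suc i = y" using last ne Suc_i by (simp add: last_conv_nth)
  finally show ?thesis using P_vs[OF i] by blast
qed

lemma path_via_edge: "adj x y \<Longrightarrow> path_via adj S x y"
  unfolding path_via_def by (intro exI[of _ "[x, y]"]) auto

lemma path_via_two_edges: "adj x z \<Longrightarrow> adj z y \<Longrightarrow> z \<in> S \<Longrightarrow> path_via adj S x y"
  unfolding path_via_def
  by (intro exI[of _ "[x, z, y]"]) (auto simp: less_Suc_eq nth_Cons split: nat.splits)

section \<open>The circulant design\<close>

lemma cdist_commute: "cdist I i j = cdist I j i"
  by (simp add: cdist_def min.commute)

lemma n12_commute: "n12 I d i j = n12 I d j i"
  by (simp add: n12_def cdist_commute)

lemma n12_eq_1_iff: "n12 I d i j = 1 \<longleftrightarrow> cdist I i j \<le> d div 2"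
  by (simp add: n12_def)

lemma n12_eq_0_or_1: "n12 I d i j = 0 \<or> n12 I d i j = 1"
  by (simp add: n12_def)

lemma cdist_le_iff:
  assumes "0 < I"
  shows "cdist I i j \<le> r \<longleftrightarrow> (\<exists>q::int. \<bar>int i - int j - q * int I\<bar> \<le> int r)"
proof -
  define x where "x = int i - int j"
  have "cdist I i j = nat (min (x mod int I) ((- x) mod int I))"
    by (simp add: cdist_def x_def)
  moreover have "min (x mod int I) ((- x) mod int I) \<le> int r \<longleftrightarrow> (\<exists>q. \<bar>x - q * int I\<bar> \<le> int r)"
  proof
    assume m: "min (x mod int I) ((- x) mod int I) \<le> int r"
    have a: "x - (x div int I) * int I = x mod int I" and b: "x - (- ((- x) div int I)) * int I = - ((- x) mod int I)"
      using div_mult_mod_eq[of x "int I"] div_mult_mod_eq[of "- x" "int I"] by linarith+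
    have "0 \<le> x mod int I" "0 \<le> (- x) mod int I" using assms by simp_all
    then show "\<exists>q. \<bar>x - q * int I\<bar> \<le> int r"
    proof (cases "x mod int I \<le> (- x) mod int I")
      case True
      then have "\<bar>x - (x div int I) * int I\<bar> \<le> int r" using m \<open>0 \<le> x mod int I\<close> unfolding a by simp
      then show ?thesis ..
    next
      case False
      then show ?thesis using m \<open>0 \<le> (- x) mod int I\<close> b by (metis abs_minus_cancel abs_of_nonneg min_def nle_le)
    qed
  next
    assume "\<exists>q. \<bar>x - q * int I\<bar> \<le> int r"
    then obtain q where q: "\<bar>x - q * int I\<bar> \<le> int r" by blast
    define y where "y = x - q * int I"
    have "x = y + q * int I" "- x = - y + (- q) * int I" by (simp_all add: y_def)
    then have "x mod int I = y mod int I" "(- x) mod int I = (- y) mod int I"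
      by (metis mod_mult_self1)+
    moreover have "y mod int I \<le> y" if "0 \<le> y" using that assms by (simp add: zmod_le_nonneg_dividend)
    moreover have "(- y) mod int I \<le> - y" if "y \<le> 0" using that assms by (simp add: zmod_le_nonneg_dividend)
    ultimately show "min (x mod int I) ((- x) mod int I) \<le> int r"
      using q y_def by (smt (verit))
  qed
  ultimately show ?thesis by (simp only: x_def nat_le_iff)
qed

lemma card_shifted_residues:
  fixes c :: int
  assumes "0 < I" and "R \<subseteq> {0..<int I}"
  shows "card {j \<in> {1..I}. (int j + c) mod int I \<in> R} = card R"
proof -
  let ?f = "\<lambda>j. (int j + c) mod int I"
  have inj: "inj_on ?f {1..I}"
  proof (rule inj_onI)
    fix j j' assume j: "j \<in> {1..I}" "j' \<in> {1..I}" and "?f j = ?f j'"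
    then have "int I dvd (int j + c) - (int j' + c)" by (simp only: mod_eq_dvd_iff)
    then have "int I dvd int j - int j'" by simp
    moreover have "\<bar>int j - int j'\<bar> < int I" using j by (auto simp: abs_less_iff)
    ultimately show "j = j'"
      using dvd_imp_le_int[of "int j - int j'" "int I"] by (cases "j = j'") auto
  qed
  have "?f ` {1..I} \<subseteq> {0..<int I}" using assms by auto
  moreover have "card (?f ` {1..I}) = card {0..<int I}" using inj by (simp add: card_image)
  ultimately have onto: "?f ` {1..I} = {0..<int I}" by (intro card_subset_eq) auto
  have "?f ` {j \<in> {1..I}. ?f j \<in> R} = ?f ` {1..I} \<inter> R" by auto
  also have "\<dots> = R" using onto assms(2) by blast
  finally have "card (?f ` {j \<in> {1..I}. ?f j \<in> R}) = card R" by simp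
  moreover have "inj_on ?f {j \<in> {1..I}. ?f j \<in> R}" using inj by (rule inj_on_subset) auto
  ultimately show ?thesis by (simp add: card_image)
qed

lemma n12_eq_1_iff_residue:
  assumes "d < I" and "even d"
  shows "n12 I d i j = 1 \<longleftrightarrow> (int j + (int (d div 2) - int i)) mod int I \<in> {0..int d}"
proof -
  define h where "h = d div 2"
  define x where "x = int j + (int h - int i)"
  have "d = 2 * h" using assms(2) by (simp add: h_def)
  then have dh: "int d = 2 * int h" by simp
  have "n12 I d i j = 1 \<longleftrightarrow> (\<exists>q. \<bar>int i - int j - q * int I\<bar> \<le> int h)"
    using cdist_le_iff[of I i j h] assms(1) by (simp add: n12_def h_def)
  also have "\<dots> \<longleftrightarrow> x mod int I \<in> {0..int d}"
  proof
    assume "\<exists>q. \<bar>int i - int j - q * int I\<bar> \<le> int h"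
    then obtain q where q: "\<bar>int i - int j - q * int I\<bar> \<le> int h" by blast
    have "x mod int I = (x + q * int I) mod int I" by simp
    also have "\<dots> = x + q * int I" using q assms(1) dh by (intro mod_pos_pos_trivial) (auto simp: x_def)
    finally show "x mod int I \<in> {0..int d}" using q dh by (auto simp: x_def)
  next
    assume r: "x mod int I \<in> {0..int d}"
    have "int i - int j - (- (x div int I)) * int I = int h - x mod int I"
      using div_mult_mod_eq[of x "int I"] by (simp add: x_def algebra_simps)
    then have "\<bar>int i - int j - (- (x div int I)) * int I\<bar> \<le> int h" using r dh by auto
    then show "\<exists>q. \<bar>int i - int j - q * int I\<bar> \<le> int h" ..
  qed
  finally show ?thesis by (simp add: x_def h_def)
qed

lemma card_n12_row:
  assumes "d < I" and "even d"
  shows "card {j \<in> {1..I}. n12 I d i j = 1} = d + 1"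
proof -
  have "card {j \<in> {1..I}. n12 I d i j = 1}
      = card {j \<in> {1..I}. (int j + (int (d div 2) - int i)) mod int I \<in> {0..int d}}"
    using n12_eq_1_iff_residue[OF assms] by (intro arg_cong[where f=card] Collect_cong) blast
  also have "\<dots> = card {0..int d}" using assms by (intro card_shifted_residues) auto
  finally show ?thesis by simp
qed

lemma n1_eq: "d < I \<Longrightarrow> even d \<Longrightarrow> n1 I d i = d + 1"
  unfolding n1_def
  by (subst sum_eq_card_if_0_or_1[OF finite_atLeastAtMost n12_eq_0_or_1]) (rule card_n12_row)

lemma n2_eq: "d < I \<Longrightarrow> even d \<Longrightarrow> n2 I d j = d + 1"
  using n1_eq[of d I j] unfolding n1_def n2_def by (simp add: n12_commute)

lemma Nobs_eq: "d < I \<Longrightarrow> even d \<Longrightarrow> Nobs I d = I * (d + 1)"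
  unfolding Nobs_def using n1_eq[unfolded n1_def] by simp

lemma nbar_eq: "d < I \<Longrightarrow> even d \<Longrightarrow> nbar I d = real d + 1"
  unfolding nbar_def using Nobs_eq by (simp add: field_simps)

lemma n12_same_row_close:
  assumes "d < I" and "even d"
    and "1 \<le> j" "j \<le> k" "k < k'" "k' \<le> I"
    and "n12 I d i j = 1" "n12 I d i k' = 1"
  shows "k' \<le> k + d \<or> I + 1 - d \<le> k'"
proof -
  have I0: "0 < I" using assms(1) by simp
  obtain q1 :: int where q1: "\<bar>int i - int j - q1 * int I\<bar> \<le> int (d div 2)"
    using cdist_le_iff[OF I0, THEN iffD1, OF assms(7)[unfolded n12_eq_1_iff]] by blast
  obtain q2 :: int where q2: "\<bar>int i - int k' - q2 * int I\<bar> \<le> int (d div 2)"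
    using cdist_le_iff[OF I0, THEN iffD1, OF assms(8)[unfolded n12_eq_1_iff]] by blast
  have "int k' - int j - (q1 - q2) * int I = (int i - int j - q1 * int I) - (int i - int k' - q2 * int I)"
    by (simp add: algebra_simps)
  moreover have "d = 2 * (d div 2)" using assms(2) by simp
  ultimately have close: "\<bar>int k' - int j - (q1 - q2) * int I\<bar> \<le> int d"
    using q1 q2 by linarith
  consider "q1 - q2 \<le> -1" | "q1 - q2 = 0" | "q1 - q2 = 1" | "q1 - q2 \<ge> 2" by linarith
  then show ?thesis
  proof cases
    case 1
    then have "(q1 - q2) * int I \<le> (- 1) * int I" by (intro mult_right_mono) auto
    then show ?thesis using close assms(3-6) by linarith
  next
    case 2
    then show ?thesis using close assms(3-6) by simp
  next
    case 3
    then show ?thesis using close assms(1,3-6) by (simp add: abs_le_iff) arith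
  next
    case 4
    then have "2 * int I \<le> (q1 - q2) * int I" by (intro mult_right_mono) auto
    then show ?thesis using close assms(1,3-6) by linarith
  qed
qed

definition shared_rows :: "nat \<Rightarrow> nat \<Rightarrow> nat \<Rightarrow> nat \<Rightarrow> nat" where
  "shared_rows I d k k' = (\<Sum>i\<in>{1..I}. n12 I d i k * n12 I d i k')"

lemma shared_rows_commute: "shared_rows I d k k' = shared_rows I d k' k"
  by (simp add: shared_rows_def mult.commute)

lemma shared_rows_eq_card:
  "shared_rows I d k k' = card {i \<in> {1..I}. n12 I d i k = 1 \<and> n12 I d i k' = 1}"
proof -
  have "shared_rows I d k k' = card {i \<in> {1..I}. n12 I d i k * n12 I d i k' = 1}"
    unfolding shared_rows_def
  proof (rule sum_eq_card_if_0_or_1)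
    fix i
    show "n12 I d i k * n12 I d i k' = 0 \<or> n12 I d i k * n12 I d i k' = 1"
      using n12_eq_0_or_1[of I d i k] n12_eq_0_or_1[of I d i k'] by auto
  qed simp
  then show ?thesis by (simp only: nat_mult_eq_1_iff)
qed

lemma sum_shared_rows:
  assumes "d < I" and "even d"
  shows "(\<Sum>k\<in>{1..I}. \<Sum>k'\<in>{1..I}. shared_rows I d k k') = I * (d + 1) * (d + 1)"
proof -
  have "(\<Sum>k\<in>{1..I}. \<Sum>k'\<in>{1..I}. shared_rows I d k k')
      = (\<Sum>k\<in>{1..I}. \<Sum>i\<in>{1..I}. \<Sum>k'\<in>{1..I}. n12 I d i k * n12 I d i k')"
    unfolding shared_rows_def by (intro sum.cong refl sum.swap)
  also have "\<dots> = (\<Sum>i\<in>{1..I}. \<Sum>k\<in>{1..I}. \<Sum>k'\<in>{1..I}. n12 I d i k * n12 I d i k')"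
    by (rule sum.swap)
  also have "\<dots> = (\<Sum>i\<in>{1..I}. n1 I d i * n1 I d i)"
    unfolding n1_def by (simp add: sum_product)
  also have "\<dots> = I * (d + 1) * (d + 1)" using n1_eq[OF assms] by (simp add: algebra_simps)
  finally show ?thesis .
qed

lemma sum_shared_rows_diagonal:
  assumes "d < I" and "even d"
  shows "(\<Sum>k\<in>{1..I}. shared_rows I d k k) = I * (d + 1)"
proof -
  have "shared_rows I d k k = n2 I d k" for k
    unfolding shared_rows_def n2_def by (intro sum.cong) (use n12_eq_0_or_1 in auto)
  then show ?thesis using n2_eq[OF assms] by simp
qed

section \<open>Sparsity of the Cholesky factor\<close>

lemma theta_A1: "m \<le> I \<Longrightarrow> theta I m = A1 m"
  by (simp add: theta_def)

lemma theta_A2: "I < m \<Longrightarrow> m \<le> 2 * I \<Longrightarrow> theta I m = A2 (m - I)"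
  by (simp add: theta_def)

context
  fixes tau tau1 tau2 Tpr :: real and I d :: nat
  assumes d_less_I: "d < I" and d_even: "even d"
    and tau_pos: "0 < tau" and tau1_pos: "0 < tau1" and tau2_pos: "0 < tau2" and Tpr_pos: "0 < Tpr"
begin

abbreviation "adj \<equiv> adjQ tau tau1 tau2 Tpr I d"
abbreviation "Lp \<equiv> Lpat tau tau1 tau2 Tpr I d"
abbreviation "Lcol m \<equiv> {j \<in> {m..Msize I}. Lp j m}"

lemma not_adj_A1_A1: "p \<le> I \<Longrightarrow> q \<le> I \<Longrightarrow> \<not> adj p q"
  by (simp add: adjQ_def Qord_def theta_A1)

lemma not_adj_A2_A2: "I < p \<Longrightarrow> p \<le> 2 * I \<Longrightarrow> I < q \<Longrightarrow> q \<le> 2 * I \<Longrightarrow> \<not> adj p q"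
  by (auto simp: adjQ_def Qord_def theta_A2)

lemma adj_A1_A2_iff:
  "1 \<le> p \<Longrightarrow> p \<le> I \<Longrightarrow> I < q \<Longrightarrow> q \<le> 2 * I \<Longrightarrow> adj p q \<longleftrightarrow> n12 I d p (q - I) = 1"
  using tau_pos n12_eq_0_or_1[of I d p "q - I"]
  by (auto simp: adjQ_def Qord_def theta_A1 theta_A2 Msize_def)

lemma adj_A2_A1_iff:
  "1 \<le> p \<Longrightarrow> p \<le> I \<Longrightarrow> I < q \<Longrightarrow> q \<le> 2 * I \<Longrightarrow> adj q p \<longleftrightarrow> n12 I d p (q - I) = 1"
  using tau_pos n12_eq_0_or_1[of I d p "q - I"]
  by (auto simp: adjQ_def Qord_def theta_A1 theta_A2 Msize_def)

lemma Lcol_A1_subset: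
  assumes m: "m \<in> {1..I}"
  shows "Lcol m \<subseteq> {m} \<union> (+) I ` {k \<in> {1..I}. n12 I d m k = 1} \<union> {2 * I + 1}"
proof
  fix j assume j: "j \<in> Lcol m"
  show "j \<in> {m} \<union> (+) I ` {k \<in> {1..I}. n12 I d m k = 1} \<union> {2 * I + 1}"
  proof (cases "j = m")
    case False
    then have "path_via adj {1..<m} m j" using j by (simp add: Lpat_def)
    then have "\<exists>u. u = m \<and> adj u j"
      by (rule path_via_invariant) (use m not_adj_A1_A1 in auto)
    then have mj: "adj m j" by blast
    have "I < j"
    proof (rule ccontr)
      assume "\<not> I < j"
      then show False using mj m not_adj_A1_A1[of m j] by simp
    qed
    moreover have "j \<le> 2 * I + 1" using mj by (simp add: adjQ_def Msize_def)
    moreover have "n12 I d m (j - I) = 1" if "j \<le> 2 * I"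
      using adj_A1_A2_iff[of m j] m mj \<open>I < j\<close> that by auto
    ultimately show ?thesis by (cases "j \<le> 2 * I") (auto intro!: image_eqI[of j _ "j - I"])
  qed simp
qed

lemma nLm_A1_le: "m \<in> {1..I} \<Longrightarrow> nLm tau tau1 tau2 Tpr I d m \<le> d + 3"
proof -
  assume m: "m \<in> {1..I}"
  let ?K = "{k \<in> {1..I}. n12 I d m k = 1}"
  have "nLm tau tau1 tau2 Tpr I d m \<le> card ({m} \<union> (+) I ` ?K \<union> {2 * I + 1})"
    unfolding nLm_def by (rule card_mono[OF _ Lcol_A1_subset[OF m]]) simp
  also have "\<dots> \<le> card ((+) I ` ?K) + 2"
    using card_Un_le[of "{m} \<union> (+) I ` ?K" "{2 * I + 1}"] card_Un_le[of "{m}" "(+) I ` ?K"] by simp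
  also have "\<dots> \<le> card ?K + 2" using card_image_le[of ?K "(+) I"] by simp
  also have "\<dots> = d + 3" using card_n12_row[OF d_less_I d_even] by simp
  finally show ?thesis .
qed

lemma Lcol_A2_subset:
  assumes k: "k \<in> {1..I}"
  shows "Lcol (I + k) \<subseteq> {I + k, 2 * I + 1} \<union> (+) I ` ({k + 1..k + d} \<union> {I + 1 - d..I})"
proof
  fix j assume j: "j \<in> Lcol (I + k)"
  show "j \<in> {I + k, 2 * I + 1} \<union> (+) I ` ({k + 1..k + d} \<union> {I + 1 - d..I})"
  proof (cases "j = I + k \<or> j = 2 * I + 1")
    case False
    then have j_A2: "I + k < j" "j \<le> 2 * I" using j by (auto simp: Msize_def)
    \<comment> \<open>covers every vertex reachable from I + k through eliminated vertices\<close>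
    define P where "P u \<longleftrightarrow> (1 \<le> u \<and> u \<le> I \<and> (\<exists>j' \<in> {1..k}. n12 I d u j' = 1)) \<or> (I < u \<and> u \<le> I + k)"
      for u
    have "path_via adj {1..<I + k} (I + k) j" using j False by (simp add: Lpat_def)
    then have "\<exists>u. P u \<and> adj u j"
    proof (rule path_via_invariant)
      show "P (I + k)" using k by (simp add: P_def)
    next
      fix u v assume Pu: "P u" and uv: "adj u v" and v: "v \<in> {1..<I + k}"
      show "P v"
      proof (cases "v \<le> I")
        case True
        then have u: "I < u" "u \<le> I + k" using Pu uv not_adj_A1_A1[of u v] by (auto simp: P_def)
        then have "n12 I d v (u - I) = 1" using adj_A2_A1_iff[of v u] uv True v k by auto
        moreover have "u - I \<in> {1..k}" using u by auto
        ultimately show ?thesis using True v by (auto simp: P_def)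
      qed (use v P_def in auto)
    qed
    then obtain u where Pu: "P u" and uj: "adj u j" by blast
    then obtain j' where u: "1 \<le> u" "u \<le> I" and j': "j' \<in> {1..k}" "n12 I d u j' = 1"
      using not_adj_A2_A2[of u j] j_A2 k by (auto simp: P_def)
    have "n12 I d u (j - I) = 1" using adj_A1_A2_iff[of u j] u uj j_A2 by auto
    then have "j - I \<le> k + d \<or> I + 1 - d \<le> j - I"
      using n12_same_row_close[OF d_less_I d_even, of j' k "j - I" u] j' j_A2 by auto
    then show ?thesis using j_A2 by (auto intro!: image_eqI[of j _ "j - I"])
  qed auto
qed

lemma nLm_A2_le: "k \<in> {1..I} \<Longrightarrow> nLm tau tau1 tau2 Tpr I d (I + k) \<le> 2 * d + 2"
proof -
  assume k: "k \<in> {1..I}"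
  let ?U = "{k + 1..k + d} \<union> {I + 1 - d..I}"
  have "nLm tau tau1 tau2 Tpr I d (I + k) \<le> card ({I + k, 2 * I + 1} \<union> (+) I ` ?U)"
    unfolding nLm_def by (rule card_mono[OF _ Lcol_A2_subset[OF k]]) simp
  also have "\<dots> \<le> card {I + k, 2 * I + 1} + card ((+) I ` ?U)" by (rule card_Un_le)
  also have "\<dots> \<le> 2 + card ?U"
    using card_image_le[of ?U "(+) I"] card_insert_le_m1[of 2 "{2 * I + 1}" "I + k"] by simp
  also have "\<dots> \<le> 2 + (d + d)"
    using card_Un_le[of "{k + 1..k + d}" "{I + 1 - d..I}"] d_less_I by simp
  finally show ?thesis by simp
qed

lemma nLm_A0_le: "nLm tau tau1 tau2 Tpr I d (2 * I + 1) \<le> 1"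
proof -
  have "Lcol (2 * I + 1) \<subseteq> {2 * I + 1}" by (auto simp: Msize_def)
  then show ?thesis unfolding nLm_def using card_mono[of "{2 * I + 1}"] by fastforce
qed

lemma nLm_le: "m \<in> {1..Msize I} \<Longrightarrow> nLm tau tau1 tau2 Tpr I d m \<le> 2 * d + 3"
proof -
  assume m: "m \<in> {1..Msize I}"
  consider "m \<le> I" | "I < m" "m \<le> 2 * I" | "m = 2 * I + 1"
    using m unfolding Msize_def by fastforce
  then show ?thesis
  proof cases
    case 1
    then show ?thesis using nLm_A1_le[of m] m by simp
  next
    case 2
    then have "nLm tau tau1 tau2 Tpr I d (I + (m - I)) \<le> 2 * d + 2" by (intro nLm_A2_le) auto
    then show ?thesis using 2 by simp
  next
    case 3
    then show ?thesis using nLm_A0_le by simp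
  qed
qed

lemma nL_le: "nL tau tau1 tau2 Tpr I d \<le> I * (d + 3) + I * (2 * d + 2) + 1"
proof -
  have "nL tau tau1 tau2 Tpr I d = (\<Sum>m\<in>{1..I}. nLm tau tau1 tau2 Tpr I d m)
     + (\<Sum>k\<in>{1..I}. nLm tau tau1 tau2 Tpr I d (I + k)) + nLm tau tau1 tau2 Tpr I d (2 * I + 1)"
    unfolding nL_def Msize_def by (rule sum_three_blocks)
  also have "\<dots> \<le> I * (d + 3) + I * (2 * d + 2) + 1"
  proof (intro add_mono)
    show "(\<Sum>m\<in>{1..I}. nLm tau tau1 tau2 Tpr I d m) \<le> I * (d + 3)"
      using sum_bounded_above[of "{1..I}" "nLm tau tau1 tau2 Tpr I d" "d + 3"] nLm_A1_le by simp
    show "(\<Sum>k\<in>{1..I}. nLm tau tau1 tau2 Tpr I d (I + k)) \<le> I * (2 * d + 2)"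
      using sum_bounded_above[of "{1..I}" "\<lambda>k. nLm tau tau1 tau2 Tpr I d (I + k)" "2 * d + 2"] nLm_A2_le
      by simp
  qed (rule nLm_A0_le)
  finally show ?thesis .
qed

lemma Qord_diagonal_nonzero: "m \<in> {1..Msize I} \<Longrightarrow> Qord tau tau1 tau2 Tpr I d m m \<noteq> 0"
proof -
  assume m: "m \<in> {1..Msize I}"
  have "0 \<le> real n * tau" for n using tau_pos by simp
  then have "0 < tau1 + real (n1 I d m) * tau" "0 < tau2 + real (n2 I d (m - I)) * tau"
    "0 < Tpr + real (Nobs I d) * tau"
    using tau1_pos tau2_pos Tpr_pos by (simp_all add: add_pos_nonneg)
  then show ?thesis using m
    by (cases "m \<le> I"; cases "m \<le> 2 * I") (auto simp: Qord_def theta_def Msize_def)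
qed

lemma Qcol_A1_card_ge:
  assumes m: "m \<in> {1..I}"
  shows "d + 2 \<le> card {j \<in> {m..Msize I}. Qord tau tau1 tau2 Tpr I d j m \<noteq> 0}"
proof -
  let ?K = "{k \<in> {1..I}. n12 I d m k = 1}"
  have sub: "{m} \<union> (+) I ` ?K \<subseteq> {j \<in> {m..Msize I}. Qord tau tau1 tau2 Tpr I d j m \<noteq> 0}"
    using m tau_pos Qord_diagonal_nonzero[of m]
    by (auto simp: Qord_def theta_A1 theta_A2 Msize_def)
  have "card ({m} \<union> (+) I ` ?K) = d + 2"
    using m card_n12_row[OF d_less_I d_even, of m] by (subst card_Un_disjoint) (auto simp: card_image)
  then show ?thesis using card_mono[OF _ sub] by simp
qed

lemma nQ_ge: "I * (d + 3) + 1 \<le> nQ tau tau1 tau2 Tpr I d"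
proof -
  let ?c = "\<lambda>m. card {j \<in> {m..Msize I}. Qord tau tau1 tau2 Tpr I d j m \<noteq> 0}"
  have diag: "1 \<le> ?c m" if "m \<in> {1..Msize I}" for m
    using that Qord_diagonal_nonzero[of m] by (auto simp: Suc_le_eq card_gt_0_iff)
  have "nQ tau tau1 tau2 Tpr I d = (\<Sum>m\<in>{1..Msize I}. ?c m)"
    unfolding nQ_def by (rule card_pairs_eq_sum) auto
  also have "\<dots> = (\<Sum>m\<in>{1..I}. ?c m) + (\<Sum>k\<in>{1..I}. ?c (I + k)) + ?c (2 * I + 1)"
    unfolding Msize_def by (rule sum_three_blocks)
  also have "\<dots> \<ge> I * (d + 2) + I * 1 + 1"
  proof (intro add_mono)
    show "I * (d + 2) \<le> (\<Sum>m\<in>{1..I}. ?c m)"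
      using sum_bounded_below[of "{1..I}" "d + 2" ?c] Qcol_A1_card_ge by simp
    show "I * 1 \<le> (\<Sum>k\<in>{1..I}. ?c (I + k))"
      using sum_bounded_below[of "{1..I}" 1 "\<lambda>k. ?c (I + k)"] diag by (simp add: Msize_def)
    show "1 \<le> ?c (2 * I + 1)" by (rule diag) (simp add: Msize_def)
  qed
  finally show ?thesis by (simp add: algebra_simps)
qed

lemma nL_le_3_nQ: "nL tau tau1 tau2 Tpr I d \<le> 3 * nQ tau tau1 tau2 Tpr I d"
  using nL_le nQ_ge by (simp add: algebra_simps)

lemma nQ_pos: "0 < nQ tau tau1 tau2 Tpr I d"
  using nQ_ge by simp

section \<open>Cost of the Cholesky factorization\<close>

lemma CostSLA_le: "CostSLA tau tau1 tau2 Tpr I d \<le> (2 * d + 3) * (2 * nL tau tau1 tau2 Tpr I d + Msize I)"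
proof -
  let ?r = "\<lambda>m. card {l \<in> {1..<m}. Lp m l}"
  have "CostSLA tau tau1 tau2 Tpr I d \<le> (\<Sum>m\<in>{1..Msize I}. (2 * d + 3) * (2 * ?r m + 1))"
    unfolding CostSLA_def
  proof (rule sum_mono)
    fix m assume m: "m \<in> {1..Msize I}"
    have "(\<Sum>j\<in>Lcol m. 2 * card {l \<in> {1..<m}. Lp j l \<and> Lp m l} + 1) \<le> (\<Sum>j\<in>Lcol m. 2 * ?r m + 1)"
      by (intro sum_mono add_right_mono mult_left_mono card_mono) auto
    also have "\<dots> = nLm tau tau1 tau2 Tpr I d m * (2 * ?r m + 1)" by (simp add: nLm_def)
    also have "\<dots> \<le> (2 * d + 3) * (2 * ?r m + 1)" using nLm_le[OF m] by (rule mult_right_mono) simp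
    finally show "(\<Sum>j\<in>Lcol m. 2 * card {l \<in> {1..<m}. Lp j l \<and> Lp m l} + 1) \<le> (2 * d + 3) * (2 * ?r m + 1)" .
  qed
  also have "\<dots> = (2 * d + 3) * (2 * (\<Sum>m\<in>{1..Msize I}. ?r m) + Msize I)"
    by (simp add: sum_distrib_left[symmetric] sum.distrib, simp add: algebra_simps)
  also have "\<dots> \<le> (2 * d + 3) * (2 * nL tau tau1 tau2 Tpr I d + Msize I)"
    using sum_card_below_le_sum_card_above[where M = "Msize I" and P = Lp] by (simp add: nL_def nLm_def)
  finally show ?thesis .
qed

lemma CostSLA_upper: "CostSLA tau tau1 tau2 Tpr I d \<le> 45 * (I * (d + 1) * (d + 1))"
proof -
  have "2 * nL tau tau1 tau2 Tpr I d + Msize I \<le> I * (6 * d + 12) + 3"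
    using nL_le by (simp add: Msize_def algebra_simps)
  also have "\<dots> \<le> I * (15 * (d + 1))" using d_less_I by (simp add: algebra_simps)
  finally have size: "2 * nL tau tau1 tau2 Tpr I d + Msize I \<le> I * (15 * (d + 1))" .
  have "CostSLA tau tau1 tau2 Tpr I d \<le> (2 * d + 3) * (2 * nL tau tau1 tau2 Tpr I d + Msize I)"
    by (rule CostSLA_le)
  also have "\<dots> \<le> (3 * (d + 1)) * (I * (15 * (d + 1)))" using size by (intro mult_le_mono) simp_all
  finally show ?thesis by (simp add: algebra_simps)
qed

lemma Lp_A2_A1: "i \<in> {1..I} \<Longrightarrow> k \<in> {1..I} \<Longrightarrow> n12 I d i k = 1 \<Longrightarrow> Lp (I + k) i"
  unfolding Lpat_def using adj_A1_A2_iff[of i "I + k"] by (auto simp: Msize_def intro!: path_via_edge)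

lemma Lp_A2_A2_fill_in:
  assumes k: "k \<in> {1..I}" and k': "k' \<in> {k + 1..I}"
    and i: "i \<in> {1..I}" "n12 I d i k = 1" "n12 I d i k' = 1"
  shows "Lp (I + k') (I + k)"
proof -
  have "adj (I + k) i" using adj_A2_A1_iff[of i "I + k"] i k by auto
  moreover have "adj i (I + k')" using adj_A1_A2_iff[of i "I + k'"] i k' by auto
  ultimately have "path_via adj {1..<I + k} (I + k) (I + k')" using i k by (intro path_via_two_edges) auto
  then show ?thesis using k k' by (auto simp: Lpat_def Msize_def)
qed

lemma CostSLA_column_A2_ge:
  assumes k: "k \<in> {1..I}"
  shows "(\<Sum>k'\<in>{k + 1..I}. 2 * shared_rows I d k k') \<le>
    (\<Sum>j\<in>Lcol (I + k). 2 * card {l \<in> {1..<I + k}. Lp j l \<and> Lp (I + k) l} + 1)"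
proof -
  let ?c = "\<lambda>j. card {l \<in> {1..<I + k}. Lp j l \<and> Lp (I + k) l}"
  let ?T = "{k + 1 + I..I + I} \<inter> Lcol (I + k)"
  have "(\<Sum>k'\<in>{k + 1..I}. 2 * shared_rows I d k k') = (\<Sum>j\<in>{k + 1 + I..I + I}. 2 * shared_rows I d k (j - I))"
    using sum.shift_bounds_cl_nat_ivl[of "\<lambda>j. 2 * shared_rows I d k (j - I)" "k + 1" I I] by simp
  also have "\<dots> = (\<Sum>j\<in>?T. 2 * shared_rows I d k (j - I))"
  proof (rule sum.mono_neutral_right)
    show "\<forall>j\<in>{k + 1 + I..I + I} - ?T. 2 * shared_rows I d k (j - I) = 0"
    proof
      fix j assume j: "j \<in> {k + 1 + I..I + I} - ?T"
      show "2 * shared_rows I d k (j - I) = 0"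
      proof (rule ccontr)
        assume "2 * shared_rows I d k (j - I) \<noteq> 0"
        then have "{i \<in> {1..I}. n12 I d i k = 1 \<and> n12 I d i (j - I) = 1} \<noteq> {}"
          unfolding shared_rows_eq_card by (metis card.empty mult_0_right)
        then obtain i where "i \<in> {1..I}" "n12 I d i k = 1" "n12 I d i (j - I) = 1" by blast
        then have "Lp (I + (j - I)) (I + k)" using j k by (intro Lp_A2_A2_fill_in) auto
        then show False using j by (auto simp: Msize_def)
      qed
    qed
  qed auto
  also have "\<dots> \<le> (\<Sum>j\<in>?T. 2 * ?c j + 1)"
  proof (rule sum_mono)
    fix j assume j: "j \<in> ?T"
    have jI: "I + (j - I) = j" and jr: "j - I \<in> {1..I}" using j k by auto
    have "shared_rows I d k (j - I) \<le> ?c j"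
      unfolding shared_rows_eq_card using j k Lp_A2_A1[OF _ jr, unfolded jI] Lp_A2_A1[OF _ k]
      by (intro card_mono) auto
    then show "2 * shared_rows I d k (j - I) \<le> 2 * ?c j + 1" using j by simp
  qed
  also have "\<dots> \<le> (\<Sum>j\<in>Lcol (I + k). 2 * ?c j + 1)" by (rule sum_mono2) auto
  finally show ?thesis .
qed

lemma CostSLA_lower: "I * d * (d + 1) \<le> CostSLA tau tau1 tau2 Tpr I d"
proof -
  let ?col = "\<lambda>m. \<Sum>j\<in>Lcol m. 2 * card {l \<in> {1..<m}. Lp j l \<and> Lp m l} + 1"
  have "I * (d + 1) * (d + 1) = 2 * (\<Sum>k\<in>{1..I}. \<Sum>k'\<in>{k + 1..I}. shared_rows I d k k') + I * (d + 1)"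
    using sum_square_symmetric[of "shared_rows I d" I, OF shared_rows_commute]
    unfolding sum_shared_rows[OF d_less_I d_even] sum_shared_rows_diagonal[OF d_less_I d_even] .
  then have "I * d * (d + 1) = (\<Sum>k\<in>{1..I}. \<Sum>k'\<in>{k + 1..I}. 2 * shared_rows I d k k')"
    by (simp add: sum_distrib_left algebra_simps)
  also have "\<dots> \<le> (\<Sum>k\<in>{1..I}. ?col (I + k))"
    by (intro sum_mono CostSLA_column_A2_ge)
  also have "\<dots> \<le> sum ?col {1..I} + (\<Sum>k\<in>{1..I}. ?col (I + k)) + ?col (2 * I + 1)" by simp
  also have "\<dots> = CostSLA tau tau1 tau2 Tpr I d"
    unfolding CostSLA_def Msize_def by (rule sum_three_blocks[symmetric])
  finally show ?thesis .
qed

lemma nL_div_nQ_le_3: "real (nL tau tau1 tau2 Tpr I d) / real (nQ tau tau1 tau2 Tpr I d) \<le> 3"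
proof -
  have "real (nL tau tau1 tau2 Tpr I d) \<le> 3 * real (nQ tau tau1 tau2 Tpr I d)"
    using nL_le_3_nQ by (metis of_nat_le_iff of_nat_mult of_nat_numeral)
  then show ?thesis using nQ_pos by (simp add: divide_le_eq)
qed

lemma CostSLA_div_bounds:
  assumes "0 < d"
  shows "1 / 2 \<le> real (CostSLA tau tau1 tau2 Tpr I d) / (real (Nobs I d) * nbar I d)"
    and "real (CostSLA tau tau1 tau2 Tpr I d) / (real (Nobs I d) * nbar I d) \<le> 45"
proof -
  have N_nbar: "real (Nobs I d) * nbar I d = real (I * (d + 1) * (d + 1))"
    using Nobs_eq[OF d_less_I d_even] nbar_eq[OF d_less_I d_even] by (simp add: algebra_simps)
  have "0 < I * (d + 1) * (d + 1)" using d_less_I by simp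
  then have pos: "0 < real (I * (d + 1) * (d + 1))" by (simp only: of_nat_0_less_iff)
  have "I * (d + 1) * (d + 1) \<le> I * (2 * d) * (d + 1)"
    using assms by (intro mult_right_mono mult_left_mono) auto
  also have "\<dots> = 2 * (I * d * (d + 1))" by simp
  also have "\<dots> \<le> 2 * CostSLA tau tau1 tau2 Tpr I d" using CostSLA_lower by simp
  finally have "real (I * (d + 1) * (d + 1)) \<le> 2 * real (CostSLA tau tau1 tau2 Tpr I d)"
    by (metis of_nat_le_iff of_nat_mult of_nat_numeral)
  then show "1 / 2 \<le> real (CostSLA tau tau1 tau2 Tpr I d) / (real (Nobs I d) * nbar I d)"
    unfolding N_nbar using pos by (simp add: le_divide_eq)
  have "real (CostSLA tau tau1 tau2 Tpr I d) \<le> 45 * real (I * (d + 1) * (d + 1))"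
    using CostSLA_upper by (metis of_nat_le_iff of_nat_mult of_nat_numeral)
  then show "real (CostSLA tau tau1 tau2 Tpr I d) / (real (Nobs I d) * nbar I d) \<le> 45"
    unfolding N_nbar using pos by (simp add: divide_le_eq)
qed

end

theorem proposition4:
  shows "(\<forall>I d tau tau1 tau2 Tpr.
            0 < d \<and> even d \<and> d + 1 \<le> I \<and> 0 < tau \<and> 0 < tau1 \<and> 0 < tau2 \<and> 0 < Tpr \<longrightarrow>
            real (nL tau tau1 tau2 Tpr I d) / real (nQ tau tau1 tau2 Tpr I d) \<le> 3)
       \<and> (\<exists>c1 c2. 0 < c1 \<and> 0 < c2 \<and>
            (\<forall>I d tau tau1 tau2 Tpr.
               0 < d \<and> even d \<and> d + 1 \<le> I \<and> 0 < tau \<and> 0 < tau1 \<and> 0 < tau2 \<and> 0 < Tpr \<longrightarrow>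
               c1 \<le> real (CostSLA tau tau1 tau2 Tpr I d) / (real (Nobs I d) * nbar I d) \<and>
               real (CostSLA tau tau1 tau2 Tpr I d) / (real (Nobs I d) * nbar I d) \<le> c2))"
  using nL_div_nQ_le_3 CostSLA_div_bounds
  by (intro conjI exI[of _ "1 / 2 :: real"] exI[of _ "45 :: real"] allI impI; simp add: Suc_le_eq)

end
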